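(* Let $X$ be a locally compact metrizable space, $\Lambda\subset\mathbb{R}$ a compact interval and $\{F_\lambda\}_{\lambda\in\Lambda}$ a parameterized family of discrete multivalued dynamical systems on $X$. Assume $N$ is an isolating neighborhood with respect to $F_\mu$ for some $\mu\in\Lambda$, and $P,Q,R$ are weak index pairs in $N$ with respect to $F_\mu$ with $P\subset\operatorname{int}_NQ$ and $Q\subset\operatorname{int}_NR$ (componentwise). Then there exists a neighborhood $\Lambda_0$ of $\mu$ in $\Lambda$ such that for every $\lambda\in\Lambda_0$ there is a weak index pair $P(\lambda)$ in $N$ with respect to $F_\lambda$ satisfying $P\subset P(\lambda)\subset R$ (componentwise).
   Context: A discrete multivalued dynamical system (dmds) on $X$ is a usc map $F:X\times\mathbb{Z}\multimap X$ with compact values such that $F(x,0)=\{x\}$; $F(F(x,n),m)=F(x,n+m)$ whenever $nm\ge0$; $y\in F(x,-1)\iff x\in F(y,1)$; it is identified with its generator. A parameterized family of dmds is given by an upper semicontinuous map $F:\Lambda\times X\multimap X$ with compact values, determined by a morphism, such that for each $\lambda$, $F_\lambda(x):=F(\lambda,x)$ is (the generator of) a dmds. $\operatorname{Inv}(N,\lambda)$ is the set of $x\in N$ admitting $\sigma:\mathbb{Z}\to N$ with $\sigma(0)=x$, $\sigma(n+1)\in F_\lambda(\sigma(n))$; $N$ compact is an isolating neighborhood for $F_\lambda$ if $\operatorname{Inv}(N,\lambda)\subset\operatorname{int}N$. With $\operatorname{bd}_{F_\lambda}A:=\operatorname{cl}A\cap\operatorname{cl}(F_\lambda(A)\setminus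 A)$, a weak index pair in $N$ with respect to $F_\lambda$ is a pair of compact sets $P_2\subset P_1\subset N$ with (a) $F_\lambda(P_i)\cap N\subset P_i$, (b) $\operatorname{bd}_{F_\lambda}P_1\subset P_2$, (c) $\operatorname{Inv}(N,\lambda)\subset\operatorname{int}(P_1\setminus P_2)$, (d) $P_1\setminus P_2\subset\operatorname{int}N$. Inclusions of pairs such as $P\subset\operatorname{int}_NQ$ mean $P_i\subset\operatorname{int}_NQ_i$ for $i=1,2$. *)

theory Defs
  imports "HOL-Analysis.Analysis"
begin

definition usc_on :: "'b::topological_space set \<Rightarrow> ('b \<Rightarrow> 'c::topological_space set) \<Rightarrow> bool" where
  "usc_on S f \<longleftrightarrow> (\<forall>U. open U \<longrightarrow> openin (top_of_set S) {x\<in>S. f x \<subseteq> U})"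

definition mimage :: "('a \<Rightarrow> 'b set) \<Rightarrow> 'a set \<Rightarrow> 'b set" where
  "mimage f A = (\<Union>x\<in>A. f x)"

text \<open>Discrete multivalued dynamical system F : X x Z -o X.  Since Z is discrete,
  upper semicontinuity on X x Z means upper semicontinuity of each F(-,n).\<close>
definition dmds :: "('a::topological_space \<Rightarrow> int \<Rightarrow> 'a set) \<Rightarrow> bool" where
  "dmds F \<longleftrightarrow>
     (\<forall>n. usc_on UNIV (\<lambda>x. F x n)) \<and>
     (\<forall>x n. compact (F x n)) \<and>
     (\<forall>x. F x 0 = {x}) \<and>
     (\<forall>x n m. n * m \<ge> 0 \<longrightarrow> mimage (\<lambda>y. F y m) (F x n) = F x (n + m)) \<and>
     (\<forall>x y. y \<in> F x (-1) \<longleftrightarrow> x \<in> F y 1)"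

definition is_dmds_generator :: "('a::topological_space \<Rightarrow> 'a set) \<Rightarrow> bool" where
  "is_dmds_generator f \<longleftrightarrow> (\<exists>F. dmds F \<and> (\<forall>x. F x 1 = f x))"

text \<open>Parameterized family of dmds over the parameter set \<Lambda>
  (the requirement "determined by a morphism" is omitted).\<close>
definition param_family_dmds :: "real set \<Rightarrow> (real \<Rightarrow> 'a::topological_space \<Rightarrow> 'a set) \<Rightarrow> bool" where
  "param_family_dmds \<Lambda> F \<longleftrightarrow>
     usc_on (\<Lambda> \<times> UNIV) (\<lambda>(l, x). F l x) \<and>
     (\<forall>l\<in>\<Lambda>. \<forall>x. compact (F l x)) \<and>
     (\<forall>l\<in>\<Lambda>. is_dmds_generator (F l))"

definition Inv :: "(real \<Rightarrow> 'a \<Rightarrow> 'a set) \<Rightarrow> 'a set \<Rightarrow> real \<Rightarrow> 'a set" where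
  "Inv F N l = {x\<in>N. \<exists>\<sigma>::int \<Rightarrow> 'a. \<sigma> 0 = x \<and> (\<forall>n. \<sigma> n \<in> N \<and> \<sigma> (n + 1) \<in> F l (\<sigma> n))}"

definition isolating_nbhd :: "(real \<Rightarrow> 'a::topological_space \<Rightarrow> 'a set) \<Rightarrow> 'a set \<Rightarrow> real \<Rightarrow> bool" where
  "isolating_nbhd F N l \<longleftrightarrow> compact N \<and> Inv F N l \<subseteq> interior N"

definition bdF :: "('a::topological_space \<Rightarrow> 'a set) \<Rightarrow> 'a set \<Rightarrow> 'a set" where
  "bdF f A = closure A \<inter> closure (mimage f A - A)"

definition weak_index_pair ::
  "(real \<Rightarrow> 'a::topological_space \<Rightarrow> 'a set) \<Rightarrow> 'a set \<Rightarrow> real \<Rightarrow> 'a set \<times> 'a set \<Rightarrow> bool" where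
  "weak_index_pair F N l P \<longleftrightarrow>
     compact (fst P) \<and> compact (snd P) \<and> snd P \<subseteq> fst P \<and> fst P \<subseteq> N \<and>
     mimage (F l) (fst P) \<inter> N \<subseteq> fst P \<and> mimage (F l) (snd P) \<inter> N \<subseteq> snd P \<and>
     bdF (F l) (fst P) \<subseteq> snd P \<and>
     Inv F N l \<subseteq> interior (fst P - snd P) \<and>
     fst P - snd P \<subseteq> interior N"

definition pair_subset :: "'a set \<times> 'a set \<Rightarrow> 'a set \<times> 'a set \<Rightarrow> bool" where
  "pair_subset P Q \<longleftrightarrow> fst P \<subseteq> fst Q \<and> snd P \<subseteq> snd Q"

definition pair_subset_intN :: "'a::topological_space set \<Rightarrow> 'a set \<times> 'a set \<Rightarrow> 'a set \<times> 'a set \<Rightarrow> bool" where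
  "pair_subset_intN N P Q \<longleftrightarrow>
     fst P \<subseteq> (top_of_set N) interior_of (fst Q) \<and> snd P \<subseteq> (top_of_set N) interior_of (snd Q)"

end

theory Submission
  imports Defs "HOL-Analysis.Function_Metric"
begin

text \<open>For \<open>l\<close> near \<open>\<mu>\<close> take \<open>P(l) = (H\<^sub>1, H\<^sub>2)\<close>, where \<open>H\<^sub>1\<close> is the set of points reachable
  from \<open>P\<^sub>1\<close> by \<open>F\<^sub>l\<close>-chains in \<open>N\<close> and \<open>H\<^sub>2\<close> the set of points reachable from \<open>Q\<^sub>2 \<inter> H\<^sub>1\<close>;
  both are positively invariant relative to \<open>N\<close>.  Since \<open>Inv(N, \<mu>)\<close> lies in the open set
  \<open>V = int(P\<^sub>1 \ P\<^sub>2) \ R\<^sub>2\<close>, compactness of \<open>N\<close> and upper semicontinuity yield \<open>K\<close> such that,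
  for all \<open>l\<close> near \<open>\<mu>\<close>, the middle point of every \<open>F\<^sub>l\<close>-chain of length \<open>2K\<close> in \<open>N\<close> lies in \<open>V\<close>.
  Hence every point of \<open>H\<^sub>1\<close> is reached within \<open>2K\<close> steps, and chains starting in \<open>Q\<^sub>2\<close> are
  shorter than \<open>2K\<close>.  Chains of bounded length starting in the \<open>F\<^sub>\<mu>\<close>-invariant sets \<open>P\<^sub>1\<close> and
  \<open>Q\<^sub>2\<close> stay, for \<open>l\<close> near \<open>\<mu>\<close>, inside their neighbourhoods \<open>Q\<^sub>1\<close> and \<open>R\<^sub>2\<close>, so
  \<open>P \<subseteq> P(l) \<subseteq> R\<close>; compactness of \<open>H\<^sub>1\<close> and \<open>H\<^sub>2\<close> comes from the bounded chain lengths.\<close>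

lemma pointwise_convergent_subseq:
  fixes S :: "nat \<Rightarrow> 'i::countable \<Rightarrow> 'a::metric_space"
  assumes "compact N" and "\<And>n j. S n j \<in> N"
  obtains r s where "strict_mono r" "\<And>j. s j \<in> N" "\<And>j. (\<lambda>n. S (r n) j) \<longlonglongrightarrow> s j"
proof -
  have "compactin (product_topology (\<lambda>_. euclidean) UNIV) (PiE UNIV (\<lambda>_::'i. N))"
    using assms(1) by (simp add: compactin_PiE)
  then have "compact (PiE UNIV (\<lambda>_::'i. N))"
    by (simp add: euclidean_product_topology)
  moreover have "S n \<in> PiE UNIV (\<lambda>_. N)" for n
    using assms(2) by auto
  ultimately obtain s r where s: "s \<in> PiE UNIV (\<lambda>_. N)" "strict_mono r" "(S \<circ> r) \<longlonglongrightarrow> s"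
    using compact_imp_seq_compact unfolding seq_compact_def by metis
  have "(\<lambda>n. S (r n) j) \<longlonglongrightarrow> s j" for j
  proof -
    have "isCont (\<lambda>f::'i \<Rightarrow> 'a. f j) s"
      using continuous_on_eq_continuous_at[of UNIV "\<lambda>f::'i \<Rightarrow> 'a. f j"] by simp
    from isCont_tendsto_compose[OF this s(3)] show ?thesis by (simp add: o_def)
  qed
  then show ?thesis
    using s by (intro that) (auto simp: PiE_iff)
qed

lemma usc_on_closed_graph:
  fixes g :: "'b::topological_space \<Rightarrow> 'c::metric_space set"
  assumes usc: "usc_on S g" and closed: "closed (g p)"
    and P: "\<And>n. P n \<in> S" "p \<in> S" "P \<longlonglongrightarrow> p" and Y: "Y \<longlonglongrightarrow> y"
    and graph: "eventually (\<lambda>n. Y n \<in> g (P n)) sequentially"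
  shows "y \<in> g p"
proof (rule ccontr)
  assume "y \<notin> g p"
  then obtain e where e: "e > 0" "cball y e \<subseteq> - g p"
    using closed open_contains_cball[of "- g p"] by blast
  then have "openin (top_of_set S) {q \<in> S. g q \<subseteq> - cball y e}"
    using usc unfolding usc_on_def by blast
  then obtain T where T: "open T" "{q \<in> S. g q \<subseteq> - cball y e} = S \<inter> T"
    by (auto simp: openin_open)
  have "p \<in> T"
    using T(2) P(2) e(2) by blast
  have "eventually (\<lambda>n. g (P n) \<subseteq> - cball y e) sequentially"
    using topological_tendstoD[OF P(3) T(1) \<open>p \<in> T\<close>] by eventually_elim (use T(2) P(1) in blast)
  moreover have "eventually (\<lambda>n. Y n \<in> cball y e) sequentially"
    using tendstoD[OF Y e(1)] by eventually_elim (simp add: dist_commute)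
  ultimately have "eventually (\<lambda>_. False) sequentially"
    using graph by eventually_elim blast
  then show False
    by simp
qed

lemma nhds_diagonal_sequence:
  fixes \<mu> :: "'a::metric_space"
  assumes "\<And>n. \<not> eventually (P n) (nhds \<mu>)"
  shows "\<exists>L. L \<longlonglongrightarrow> \<mu> \<and> (\<forall>n. \<not> P n (L n))"
proof -
  have "\<exists>l. dist l \<mu> < inverse (real (Suc n)) \<and> \<not> P n l" for n
    using assms[of n] unfolding eventually_nhds_metric
    by (metis inverse_positive_iff_positive of_nat_0_less_iff zero_less_Suc)
  then obtain L where L: "\<And>n. dist (L n) \<mu> < inverse (real (Suc n)) \<and> \<not> P n (L n)"
    by metis
  have "L \<longlonglongrightarrow> \<mu>"
    by (rule metric_tendsto_imp_tendsto[OF LIMSEQ_inverse_real_of_nat])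
       (use L in \<open>auto intro!: always_eventually less_imp_le\<close>)
  then show ?thesis
    using L by blast
qed

definition chain_in :: "'a set \<Rightarrow> ('a \<Rightarrow> 'a set) \<Rightarrow> nat \<Rightarrow> (nat \<Rightarrow> 'a) \<Rightarrow> bool" where
  "chain_in N f k x \<longleftrightarrow> (\<forall>i\<le>k. x i \<in> N) \<and> (\<forall>i<k. x (Suc i) \<in> f (x i))"

definition reach :: "'a set \<Rightarrow> ('a \<Rightarrow> 'a set) \<Rightarrow> 'a set \<Rightarrow> nat \<Rightarrow> 'a set" where
  "reach N f C k = {x k | x. chain_in N f k x \<and> x 0 \<in> C}"

definition forward_hull :: "'a set \<Rightarrow> ('a \<Rightarrow> 'a set) \<Rightarrow> 'a set \<Rightarrow> 'a set" where
  "forward_hull N f C = (\<Union>k. reach N f C k)"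

lemma chain_in_mono: "chain_in N f k x \<Longrightarrow> m \<le> k \<Longrightarrow> chain_in N f m x"
  unfolding chain_in_def by auto

lemma chain_in_shift: "chain_in N f k x \<Longrightarrow> d + m \<le> k \<Longrightarrow> chain_in N f m (\<lambda>i. x (i + d))"
  unfolding chain_in_def by auto

lemma chain_in_snoc:
  assumes "chain_in N f k x" "y \<in> f (x k)" "y \<in> N"
  shows "chain_in N f (Suc k) (x(Suc k := y))"
  unfolding chain_in_def
proof (intro conjI allI impI)
  fix i assume "i \<le> Suc k"
  then show "(x(Suc k := y)) i \<in> N"
    using assms unfolding chain_in_def by (cases "i = Suc k") auto
next
  fix i assume "i < Suc k"
  then show "(x(Suc k := y)) (Suc i) \<in> f ((x(Suc k := y)) i)"
    using assms unfolding chain_in_def by (cases "i = k") auto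
qed

lemma chain_in_invariant:
  assumes inv: "mimage f A \<inter> N \<subseteq> A" and x: "chain_in N f k x" "x 0 \<in> A"
  shows "i \<le> k \<Longrightarrow> x i \<in> A"
proof (induction i)
  case (Suc i)
  then have "x i \<in> A" "i < k"
    by simp_all
  moreover have "x (Suc i) \<in> f (x i)" "x (Suc i) \<in> N"
    using x(1) \<open>i < k\<close> unfolding chain_in_def by simp_all
  ultimately have "x (Suc i) \<in> mimage f A \<inter> N"
    unfolding mimage_def by blast
  then show ?case
    using inv by blast
qed (use x in simp)

lemma reach_subset: "reach N f C k \<subseteq> N"
  unfolding reach_def chain_in_def by auto

lemma forward_hull_subset: "forward_hull N f C \<subseteq> N"
  unfolding forward_hull_def by (simp add: UN_least reach_subset)

lemma subset_forward_hull: "C \<subseteq> N \<Longrightarrow> C \<subseteq> forward_hull N f C"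
proof
  fix y assume "C \<subseteq> N" "y \<in> C"
  then have "y \<in> reach N f C 0"
    unfolding reach_def chain_in_def by (intro CollectI exI[of _ "\<lambda>_. y"]) auto
  then show "y \<in> forward_hull N f C"
    unfolding forward_hull_def by blast
qed

lemma forward_hull_invariant: "mimage f (forward_hull N f C) \<inter> N \<subseteq> forward_hull N f C"
proof
  fix y assume "y \<in> mimage f (forward_hull N f C) \<inter> N"
  then obtain k x where "chain_in N f k x" "x 0 \<in> C" "y \<in> f (x k)" "y \<in> N"
    unfolding mimage_def forward_hull_def reach_def by blast
  then have "y \<in> reach N f C (Suc k)"
    unfolding reach_def by (intro CollectI exI[of _ "x(Suc k := y)"]) (simp add: chain_in_snoc)
  then show "y \<in> forward_hull N f C"
    unfolding forward_hull_def by blast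
qed

lemma forward_hull_least:
  assumes "C \<inter> N \<subseteq> A" "mimage f A \<inter> N \<subseteq> A"
  shows "forward_hull N f C \<subseteq> A"
proof
  fix y assume "y \<in> forward_hull N f C"
  then obtain k x where x: "chain_in N f k x" "x 0 \<in> C" "y = x k"
    unfolding forward_hull_def reach_def by blast
  then have "x 0 \<in> A"
    using assms(1) unfolding chain_in_def by auto
  then show "y \<in> A"
    using chain_in_invariant[OF assms(2) x(1)] x(3) by blast
qed

lemma forward_hull_eq_reach_atMost:
  assumes "j \<le> m" and through: "\<And>x. chain_in N f m x \<Longrightarrow> x j \<in> C"
  shows "forward_hull N f C = (\<Union>k\<le>m. reach N f C k)"
proof
  show "forward_hull N f C \<subseteq> (\<Union>k\<le>m. reach N f C k)"
  proof
    fix y assume "y \<in> forward_hull N f C"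
    then obtain k x where x: "chain_in N f k x" "x 0 \<in> C" "y = x k"
      unfolding forward_hull_def reach_def by blast
    show "y \<in> (\<Union>k\<le>m. reach N f C k)"
    proof (cases "k \<le> m")
      case True
      then show ?thesis
        using x unfolding reach_def by blast
    next
      case False
      define d where "d = k - m"
      have "x (j + d) \<in> C"
        using through[OF chain_in_shift[OF x(1), of d m]] False unfolding d_def by simp
      moreover have "chain_in N f (m - j) (\<lambda>i. x (i + (j + d)))"
        using chain_in_shift[OF x(1), of "j + d" "m - j"] False \<open>j \<le> m\<close> unfolding d_def by simp
      moreover have "m - j + (j + d) = k"
        using False \<open>j \<le> m\<close> unfolding d_def by simp
      ultimately have "y \<in> reach N f C (m - j)"
        unfolding reach_def x(3) by (intro CollectI exI[of _ "\<lambda>i. x (i + (j + d))"]) simp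
      then show ?thesis
        by auto
    qed
  qed
qed (auto simp: forward_hull_def)

lemma forward_hull_eq_reach_lessThan:
  assumes "\<And>x k. chain_in N f k x \<Longrightarrow> x 0 \<in> C \<Longrightarrow> k < m"
  shows "forward_hull N f C = (\<Union>k<m. reach N f C k)"
  using assms unfolding forward_hull_def reach_def by blast

lemma Inv_chain_through:
  assumes "y \<in> Inv F N l" "j \<le> m"
  obtains x where "chain_in N (F l) m x" "x j = y"
proof -
  obtain \<sigma> :: "int \<Rightarrow> 'a" where \<sigma>: "\<sigma> 0 = y" "\<And>n. \<sigma> n \<in> N \<and> \<sigma> (n + 1) \<in> F l (\<sigma> n)"
    using assms(1) unfolding Inv_def by blast
  define x where "x i = \<sigma> (int i - int j)" for i
  have "x (Suc i) \<in> F l (x i)" for i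
    using \<sigma>(2)[of "int i - int j"] unfolding x_def by (simp add: algebra_simps)
  then have "chain_in N (F l) m x"
    using \<sigma>(2) unfolding chain_in_def x_def by blast
  moreover have "x j = y"
    using \<sigma>(1) unfolding x_def by simp
  ultimately show ?thesis
    using that by blast
qed

lemma bdF_subset:
  assumes "closed A" "mimage f A \<inter> N \<subseteq> A" "A - B \<subseteq> interior N"
  shows "bdF f A \<subseteq> B"
proof -
  have "closure (mimage f A - A) \<subseteq> closure (- N)"
    using assms(2) by (intro closure_mono) blast
  then have "bdF f A \<subseteq> A - interior N"
    using assms(1) unfolding bdF_def by (auto simp: closure_complement)
  then show ?thesis
    using assms(3) by blast
qed

lemma weak_index_pairI:
  fixes F :: "real \<Rightarrow> 'a::t2_space \<Rightarrow> 'a set"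
  assumes "compact P1" "compact P2" "P2 \<subseteq> P1" "P1 \<subseteq> N"
    and "mimage (F l) P1 \<inter> N \<subseteq> P1" "mimage (F l) P2 \<inter> N \<subseteq> P2"
    and "Inv F N l \<subseteq> interior (P1 - P2)" "P1 - P2 \<subseteq> interior N"
  shows "weak_index_pair F N l (P1, P2)"
  using assms bdF_subset[OF compact_imp_closed[OF assms(1)] assms(5,8)]
  unfolding weak_index_pair_def by simp

lemma subset_interior_of_top_of_set:
  assumes "A \<subseteq> (top_of_set N) interior_of B"
  shows "\<exists>T. open T \<and> A \<subseteq> T \<and> N \<inter> T \<subseteq> B"
proof -
  obtain T where "open T" "(top_of_set N) interior_of B = N \<inter> T"
    using openin_interior_of[of "top_of_set N" B] unfolding openin_open by blast
  then show ?thesis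
    using assms interior_of_subset[of "top_of_set N" B] by blast
qed

locale usc_family =
  fixes F :: "real \<Rightarrow> 'a::metric_space \<Rightarrow> 'a set" and Lam :: "real set" and N :: "'a set"
  assumes usc: "usc_on (Lam \<times> UNIV) (\<lambda>(l, x). F l x)"
    and closed_values: "\<And>l x. l \<in> Lam \<Longrightarrow> closed (F l x)"
    and compact_N: "compact N"
begin

lemma convergent_subchain:
  fixes S :: "nat \<Rightarrow> int \<Rightarrow> 'a"
  assumes S: "\<And>n j. S n j \<in> N" and L: "\<And>n. L n \<in> Lam" "l \<in> Lam" "L \<longlonglongrightarrow> l"
  obtains r s where "strict_mono r" "\<And>j. s j \<in> N" "\<And>j. (\<lambda>n. S (r n) j) \<longlonglongrightarrow> s j"
    "\<And>j. eventually (\<lambda>n. S n (j + 1) \<in> F (L n) (S n j)) sequentially \<Longrightarrow> s (j + 1) \<in> F l (s j)"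
proof -
  obtain r s where rs: "strict_mono r" "\<And>j. s j \<in> N" "\<And>j. (\<lambda>n. S (r n) j) \<longlonglongrightarrow> s j"
    using pointwise_convergent_subseq[of N S] compact_N S by blast
  have step: "s (j + 1) \<in> F l (s j)"
    if "eventually (\<lambda>n. S n (j + 1) \<in> F (L n) (S n j)) sequentially" for j
  proof -
    have "(\<lambda>n. (L (r n), S (r n) j)) \<longlonglongrightarrow> (l, s j)"
      using LIMSEQ_subseq_LIMSEQ[OF L(3) rs(1)] rs(3) by (intro tendsto_Pair) (simp_all add: o_def)
    moreover have "closed ((\<lambda>(l, x). F l x) (l, s j))"
      using closed_values L(2) by simp
    moreover have "(L (r n), S (r n) j) \<in> Lam \<times> UNIV" for n
      using L(1) by simp
    moreover have "(l, s j) \<in> Lam \<times> UNIV"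
      using L(2) by simp
    moreover have "eventually (\<lambda>n. S (r n) (j + 1) \<in> (\<lambda>(l, x). F l x) (L (r n), S (r n) j)) sequentially"
      using eventually_subseq[OF rs(1) that] by simp
    ultimately have "s (j + 1) \<in> (\<lambda>(l, x). F l x) (l, s j)"
      by (intro usc_on_closed_graph[OF usc _ _ _ _ rs(3)])
    then show ?thesis
      by simp
  qed
  from that[OF rs step] show ?thesis .
qed

lemma convergent_subchain_finite:
  assumes X: "\<And>n. chain_in N (F (L n)) k (X n)" and L: "\<And>n. L n \<in> Lam" "l \<in> Lam" "L \<longlonglongrightarrow> l"
  obtains r x where "strict_mono r" "chain_in N (F l) k x" "\<And>i. i \<le> k \<Longrightarrow> (\<lambda>n. X (r n) i) \<longlonglongrightarrow> x i"
proof -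
  define S where "S n j = X n (min k (nat j))" for n and j :: int
  have SN: "S n j \<in> N" for n j
    using X[of n] unfolding S_def chain_in_def by simp
  obtain r s where rs: "strict_mono r" "\<And>j. s j \<in> N" "\<And>j. (\<lambda>n. S (r n) j) \<longlonglongrightarrow> s j"
    "\<And>j. eventually (\<lambda>n. S n (j + 1) \<in> F (L n) (S n j)) sequentially \<Longrightarrow> s (j + 1) \<in> F l (s j)"
    using convergent_subchain[of S L l] SN L by blast
  define x where "x i = s (int i)" for i
  have "x (Suc i) \<in> F l (x i)" if "i < k" for i
  proof -
    have "S n (int i + 1) \<in> F (L n) (S n (int i))" for n
      using X[of n] that unfolding S_def chain_in_def by (simp add: nat_add_distrib)
    then show ?thesis
      using rs(4)[of "int i"] unfolding x_def by (simp add: add.commute)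
  qed
  then have "chain_in N (F l) k x"
    using rs(2) unfolding chain_in_def x_def by blast
  moreover have "(\<lambda>n. X (r n) i) \<longlonglongrightarrow> x i" if "i \<le> k" for i
    using rs(3)[of "int i"] that unfolding S_def x_def by simp
  ultimately show ?thesis
    using rs(1) that by blast
qed

lemma compact_reach:
  assumes "l \<in> Lam" "closed C"
  shows "compact (reach N (F l) C k)"
  unfolding compact_eq_seq_compact_metric seq_compact_def
proof (intro allI impI)
  fix y :: "nat \<Rightarrow> 'a" assume "\<forall>n. y n \<in> reach N (F l) C k"
  then have "\<forall>n. \<exists>x. chain_in N (F l) k x \<and> x 0 \<in> C \<and> y n = x k"
    unfolding reach_def by blast
  then obtain X where X: "\<And>n. chain_in N (F l) k (X n)" "\<And>n. X n 0 \<in> C" "\<And>n. y n = X n k"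
    by metis
  obtain r x where rx: "strict_mono r" "chain_in N (F l) k x" "\<And>i. i \<le> k \<Longrightarrow> (\<lambda>n. X (r n) i) \<longlonglongrightarrow> x i"
    using convergent_subchain_finite[of "\<lambda>_. l" k X l] X(1) assms(1) by auto
  have "x 0 \<in> C"
    using closed_sequentially[OF assms(2) _ rx(3)[of 0]] X(2) by blast
  then have "x k \<in> reach N (F l) C k"
    using rx(2) unfolding reach_def by blast
  moreover have "(y \<circ> r) \<longlonglongrightarrow> x k"
    using rx(3)[of k] X(3) by (simp add: o_def)
  ultimately show "\<exists>a\<in>reach N (F l) C k. \<exists>r. strict_mono r \<and> (y \<circ> r) \<longlonglongrightarrow> a"
    using rx(1) by blast
qed

lemma eventually_chains_stay_in:
  assumes "\<mu> \<in> Lam" "closed A" "mimage (F \<mu>) A \<inter> N \<subseteq> A" "open T" "A \<subseteq> T"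
  shows "eventually (\<lambda>l. l \<in> Lam \<longrightarrow> (\<forall>x. chain_in N (F l) k x \<longrightarrow> x 0 \<in> A \<longrightarrow> x k \<in> T)) (nhds \<mu>)"
    (is "eventually ?P _")
proof (rule ccontr)
  assume "\<not> eventually ?P (nhds \<mu>)"
  then obtain L where L: "L \<longlonglongrightarrow> \<mu>" "\<And>n. \<not> ?P (L n)"
    using nhds_diagonal_sequence[of "\<lambda>_. ?P" \<mu>] by blast
  then have "\<forall>n. \<exists>x. chain_in N (F (L n)) k x \<and> x 0 \<in> A \<and> x k \<notin> T"
    by blast
  then obtain X where X: "\<And>n. chain_in N (F (L n)) k (X n)" "\<And>n. X n 0 \<in> A" "\<And>n. X n k \<notin> T"
    by metis
  have "L n \<in> Lam" for n
    using L(2) by blast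
  then obtain r x where rx: "strict_mono r" "chain_in N (F \<mu>) k x"
    "\<And>i. i \<le> k \<Longrightarrow> (\<lambda>n. X (r n) i) \<longlonglongrightarrow> x i"
    using convergent_subchain_finite[of L k X \<mu>] X(1) assms(1) L(1) by blast
  have "x 0 \<in> A"
    using closed_sequentially[OF assms(2) _ rx(3)[of 0]] X(2) by blast
  then have "x k \<in> T"
    using chain_in_invariant[OF assms(3) rx(2)] assms(5) by blast
  then have "eventually (\<lambda>n. X (r n) k \<in> T) sequentially"
    using topological_tendstoD[OF rx(3) assms(4)] by blast
  then show False
    using X(3) by simp
qed

lemma eventually_chains_centred_in:
  assumes "\<mu> \<in> Lam" "open V" "Inv F N \<mu> \<subseteq> V"
  shows "\<exists>K. eventually (\<lambda>l. l \<in> Lam \<longrightarrow> (\<forall>x. chain_in N (F l) (2 * K) x \<longrightarrow> x K \<in> V)) (nhds \<mu>)"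
proof (rule ccontr)
  define P where "P K l \<longleftrightarrow> l \<in> Lam \<longrightarrow> (\<forall>x. chain_in N (F l) (2 * K) x \<longrightarrow> x K \<in> V)" for K l
  assume "\<not> ?thesis"
  then have "\<And>K. \<not> eventually (P K) (nhds \<mu>)"
    unfolding P_def by blast
  then obtain L where L: "L \<longlonglongrightarrow> \<mu>" "\<And>n. \<not> P n (L n)"
    using nhds_diagonal_sequence[of P \<mu>] by blast
  then have "\<forall>n. \<exists>x. chain_in N (F (L n)) (2 * n) x \<and> x n \<notin> V"
    unfolding P_def by blast
  then obtain X where X: "\<And>n. chain_in N (F (L n)) (2 * n) (X n)" "\<And>n. X n n \<notin> V"
    by metis
  have L_Lam: "L n \<in> Lam" for n
    using L(2) unfolding P_def by blast
  \<comment> \<open>Recentre the \<open>n\<close>-th chain at its middle point and extend it constantly beyond its ends.\<close>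
  define S where "S n j = X n (nat (min (2 * int n) (int n + j)))" for n and j :: int
  have SN: "S n j \<in> N" for n j
    using X(1)[of n] unfolding S_def chain_in_def by (simp add: nat_le_iff)
  obtain r s where rs: "strict_mono r" "\<And>j. s j \<in> N" "\<And>j. (\<lambda>n. S (r n) j) \<longlonglongrightarrow> s j"
    "\<And>j. eventually (\<lambda>n. S n (j + 1) \<in> F (L n) (S n j)) sequentially \<Longrightarrow> s (j + 1) \<in> F \<mu> (s j)"
    using convergent_subchain[of S L \<mu>] SN L_Lam assms(1) L(1) by blast
  have "eventually (\<lambda>n. S n (j + 1) \<in> F (L n) (S n j)) sequentially" for j
    unfolding eventually_sequentially
  proof (intro exI allI impI)
    fix n assume "Suc (nat \<bar>j\<bar>) \<le> n"
    then have "nat (int n + (j + 1)) = Suc (nat (int n + j))" "nat (int n + j) < 2 * n"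
      "min (2 * int n) (int n + j) = int n + j" "min (2 * int n) (int n + (j + 1)) = int n + (j + 1)"
      by auto
    then show "S n (j + 1) \<in> F (L n) (S n j)"
      using X(1)[of n] unfolding S_def chain_in_def by simp
  qed
  then have "s 0 \<in> Inv F N \<mu>"
    unfolding Inv_def using rs(2,4) by blast
  then have "eventually (\<lambda>n. S (r n) 0 \<in> V) sequentially"
    using topological_tendstoD[OF rs(3) assms(2)] assms(3) by blast
  then show False
    using X(2) unfolding S_def by simp
qed

lemma weak_index_pair_forward_hulls:
  assumes l: "l \<in> Lam"
    and P: "compact P1" "P2 \<subseteq> P1" "P1 \<subseteq> N" "P2 \<subseteq> Q2"
    and Q: "compact Q2" "Q1 \<subseteq> R1" "Q1 - Q2 \<subseteq> interior N"
    and V: "open V" "V \<subseteq> P1" "V \<inter> R2 = {}"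
    and P1_Q1: "\<And>k x. k \<le> 2 * K \<Longrightarrow> chain_in N (F l) k x \<Longrightarrow> x 0 \<in> P1 \<Longrightarrow> x k \<in> Q1"
    and Q2_R2: "\<And>k x. k \<le> 2 * K \<Longrightarrow> chain_in N (F l) k x \<Longrightarrow> x 0 \<in> Q2 \<Longrightarrow> x k \<in> R2"
    and middle: "\<And>x. chain_in N (F l) (2 * K) x \<Longrightarrow> x K \<in> V"
  defines "H1 \<equiv> forward_hull N (F l) P1"
    and "H2 \<equiv> forward_hull N (F l) (Q2 \<inter> forward_hull N (F l) P1)"
  shows "weak_index_pair F N l (H1, H2)" "pair_subset (P1, P2) (H1, H2)" "pair_subset (H1, H2) (R1, R2)"
proof -
  have H1_eq: "H1 = (\<Union>k\<le>2 * K. reach N (F l) P1 k)"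
    unfolding H1_def using middle V(2) by (intro forward_hull_eq_reach_atMost[of K]) auto
  have short: "k < 2 * K" if "chain_in N (F l) k x" "x 0 \<in> Q2" for k x
  proof (rule ccontr)
    assume "\<not> k < 2 * K"
    then have "x K \<in> V" "x K \<in> R2"
      using middle Q2_R2[of K] chain_in_mono[OF that(1)] that(2) by auto
    then show False
      using V(3) by blast
  qed
  have H2_eq: "H2 = (\<Union>k<2 * K. reach N (F l) (Q2 \<inter> H1) k)"
    unfolding H2_def H1_def[symmetric] using short by (intro forward_hull_eq_reach_lessThan) blast
  have H1_Q1: "H1 \<subseteq> Q1"
    unfolding H1_eq reach_def using P1_Q1 by blast
  have H2_R2: "H2 \<subseteq> R2"
    unfolding H2_eq reach_def using Q2_R2 by fastforce
  have compact_H1: "compact H1"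
    unfolding H1_eq by (intro compact_UN finite_atMost compact_reach[OF l] compact_imp_closed P(1))
  have compact_H2: "compact H2"
    unfolding H2_eq
    by (intro compact_UN finite_lessThan compact_reach[OF l] closed_Int compact_imp_closed Q(1) compact_H1)
  have invariant_H1: "mimage (F l) H1 \<inter> N \<subseteq> H1"
    unfolding H1_def by (rule forward_hull_invariant)
  have P1_H1: "P1 \<subseteq> H1"
    unfolding H1_def using P(3) by (rule subset_forward_hull)
  have Q2_H2: "Q2 \<inter> H1 \<subseteq> H2"
    unfolding H2_def H1_def[symmetric] using forward_hull_subset[of N "F l" P1]
    by (intro subset_forward_hull) (auto simp: H1_def)
  have H2_H1: "H2 \<subseteq> H1"
    unfolding H2_def H1_def[symmetric] using invariant_H1 by (intro forward_hull_least) auto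
  have H12_interior: "H1 - H2 \<subseteq> interior N"
    using H1_Q1 Q(3) Q2_H2 by blast
  have "Inv F N l \<subseteq> V"
  proof
    fix y assume "y \<in> Inv F N l"
    then obtain x where "chain_in N (F l) (2 * K) x" "x K = y"
      using Inv_chain_through[of y F N l K "2 * K"] by auto
    then show "y \<in> V"
      using middle by blast
  qed
  moreover have "V \<subseteq> interior (H1 - H2)"
    using V P1_H1 H2_R2 by (intro interior_maximal) auto
  ultimately have "Inv F N l \<subseteq> interior (H1 - H2)"
    by blast
  moreover have "H1 \<subseteq> N" "mimage (F l) H2 \<inter> N \<subseteq> H2"
    unfolding H1_def H2_def by (rule forward_hull_subset, rule forward_hull_invariant)
  ultimately show "weak_index_pair F N l (H1, H2)"
    using compact_H1 compact_H2 H2_H1 invariant_H1 H12_interior by (intro weak_index_pairI)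
  show "pair_subset (P1, P2) (H1, H2)" "pair_subset (H1, H2) (R1, R2)"
    unfolding pair_subset_def using P1_H1 P(2,4) Q2_H2 H1_Q1 Q(2) H2_R2 by auto
qed

lemma eventually_weak_index_pair_between:
  assumes "\<mu> \<in> Lam"
    and "weak_index_pair F N \<mu> (P1, P2)" "weak_index_pair F N \<mu> (Q1, Q2)" "weak_index_pair F N \<mu> (R1, R2)"
    and "pair_subset_intN N (P1, P2) (Q1, Q2)" "pair_subset_intN N (Q1, Q2) (R1, R2)"
  shows "eventually (\<lambda>l. l \<in> Lam \<longrightarrow> (\<exists>Pl. weak_index_pair F N l Pl \<and>
           pair_subset (P1, P2) Pl \<and> pair_subset Pl (R1, R2))) (nhds \<mu>)"
proof -
  have P: "compact P1" "P2 \<subseteq> P1" "P1 \<subseteq> N" "mimage (F \<mu>) P1 \<inter> N \<subseteq> P1"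
    "Inv F N \<mu> \<subseteq> interior (P1 - P2)"
    and Q: "compact Q2" "mimage (F \<mu>) Q2 \<inter> N \<subseteq> Q2" "Q1 - Q2 \<subseteq> interior N"
    and R: "compact R2" "Inv F N \<mu> \<subseteq> interior (R1 - R2)"
    using assms(2-4) unfolding weak_index_pair_def by auto
  have intN: "P1 \<subseteq> (top_of_set N) interior_of Q1" "P2 \<subseteq> (top_of_set N) interior_of Q2"
    "Q1 \<subseteq> (top_of_set N) interior_of R1" "Q2 \<subseteq> (top_of_set N) interior_of R2"
    using assms(5,6) unfolding pair_subset_intN_def by simp_all
  obtain T1 where T1: "open T1" "P1 \<subseteq> T1" "N \<inter> T1 \<subseteq> Q1"
    using subset_interior_of_top_of_set[OF intN(1)] by blast
  obtain T2 where T2: "open T2" "Q2 \<subseteq> T2" "N \<inter> T2 \<subseteq> R2"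
    using subset_interior_of_top_of_set[OF intN(4)] by blast
  have P2_Q2: "P2 \<subseteq> Q2"
    using intN(2) interior_of_subset[of "top_of_set N" Q2] by blast
  have Q1_R1: "Q1 \<subseteq> R1"
    using intN(3) interior_of_subset[of "top_of_set N" R1] by blast
  define V where "V = interior (P1 - P2) - R2"
  have V: "open V" "V \<subseteq> P1" "V \<inter> R2 = {}"
    unfolding V_def using compact_imp_closed[OF R(1)] interior_subset[of "P1 - P2"] by auto
  have "Inv F N \<mu> \<subseteq> V"
    unfolding V_def using P(5) R(2) interior_subset[of "R1 - R2"] by blast
  obtain K where "eventually (\<lambda>l. l \<in> Lam \<longrightarrow> (\<forall>x. chain_in N (F l) (2 * K) x \<longrightarrow> x K \<in> V)) (nhds \<mu>)"
    using eventually_chains_centred_in[OF assms(1) V(1) \<open>Inv F N \<mu> \<subseteq> V\<close>] by blast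
  moreover have "eventually (\<lambda>l. \<forall>k\<in>{..2 * K}. l \<in> Lam \<longrightarrow>
      (\<forall>x. chain_in N (F l) k x \<longrightarrow> x 0 \<in> P1 \<longrightarrow> x k \<in> T1)) (nhds \<mu>)"
    using eventually_chains_stay_in[OF assms(1) compact_imp_closed P(4) T1(1,2)] P(1)
    by (intro eventually_ball_finite) auto
  moreover have "eventually (\<lambda>l. \<forall>k\<in>{..2 * K}. l \<in> Lam \<longrightarrow>
      (\<forall>x. chain_in N (F l) k x \<longrightarrow> x 0 \<in> Q2 \<longrightarrow> x k \<in> T2)) (nhds \<mu>)"
    using eventually_chains_stay_in[OF assms(1) compact_imp_closed Q(2) T2(1,2)] Q(1)
    by (intro eventually_ball_finite) auto
  ultimately show ?thesis
  proof eventually_elim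
    case (elim l)
    show ?case
    proof
      assume l: "l \<in> Lam"
      have "x k \<in> N" if "chain_in N (F l) k x" for k x
        using that unfolding chain_in_def by simp
      then show "\<exists>Pl. weak_index_pair F N l Pl \<and> pair_subset (P1, P2) Pl \<and> pair_subset Pl (R1, R2)"
        using weak_index_pair_forward_hulls[OF l P(1-3) P2_Q2 Q(1) Q1_R1 Q(3) V(1-3), of K]
          elim l T1(3) T2(3) by blast
    qed
  qed
qed

end

theorem mainTheorem7:
  fixes F :: "real \<Rightarrow> 'a::metric_space \<Rightarrow> 'a set"
    and a b \<mu> :: real and N :: "'a set" and P Q R :: "'a set \<times> 'a set"
  assumes "locally compact (UNIV :: 'a set)"
    and "a \<le> b"
    and "param_family_dmds {a..b} F"
    and "\<mu> \<in> {a..b}"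
    and "isolating_nbhd F N \<mu>"
    and "weak_index_pair F N \<mu> P"
    and "weak_index_pair F N \<mu> Q"
    and "weak_index_pair F N \<mu> R"
    and "pair_subset_intN N P Q"
    and "pair_subset_intN N Q R"
  shows "\<exists>\<Lambda>0. openin (top_of_set {a..b}) \<Lambda>0 \<and> \<mu> \<in> \<Lambda>0 \<and>
           (\<forall>l\<in>\<Lambda>0. \<exists>Pl. weak_index_pair F N l Pl \<and> pair_subset P Pl \<and> pair_subset Pl R)"
proof -
  interpret usc_family F "{a..b}" N
    using assms(3,5) unfolding param_family_dmds_def isolating_nbhd_def
    by unfold_locales (auto simp: compact_imp_closed)
  have "eventually (\<lambda>l. l \<in> {a..b} \<longrightarrow>
      (\<exists>Pl. weak_index_pair F N l Pl \<and> pair_subset P Pl \<and> pair_subset Pl R)) (nhds \<mu>)"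
    using eventually_weak_index_pair_between[OF assms(4), of "fst P" "snd P" "fst Q" "snd Q" "fst R" "snd R"]
      assms(6-10) by simp
  then obtain S where "open S" "\<mu> \<in> S"
    "\<forall>l\<in>S. l \<in> {a..b} \<longrightarrow> (\<exists>Pl. weak_index_pair F N l Pl \<and> pair_subset P Pl \<and> pair_subset Pl R)"
    unfolding eventually_nhds by blast
  then show ?thesis
    using assms(4) by (intro exI[of _ "{a..b} \<inter> S"]) (auto intro: openin_open_Int)
qed

end
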